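(* Let $n\in\{5,6,7\}$. The spanning subgraph $H$ of $P_n$ whose edges are those given by the prefix-reversals $r_4$ and $r_5$ is a disjoint union of $10$-cycles. Each such cycle consists of permutations of the same parity. Consequently, $P_n$ has an equitable proper $4$-coloring in which every color class has exactly $n!/4$ vertices. This coloring is obtained by properly $2$-coloring the cycles of $H$ consisting of even permutations with two colors, and the cycles consisting of odd permutations with two other colors.
   Context: For $n\geqslant 1$, the Pancake graph $P_n$ is the Cayley graph on the symmetric group $\mathrm{Sym}_n$, with permutations written in one-line notation $\pi=[\pi_1\pi_2\ldots\pi_n]$. Its generating set consists of the prefix-reversals $r_i$, $2\leqslant i\leqslant n$. Multiplying $\pi$ on the right by $r_i$ reverses the first $i$ entries: $\pi r_i=[\pi_i\pi_{i-1}\ldots\pi_1\pi_{i+1}\ldots\pi_n]$. Two vertices $\pi,\sigma$ are adjacent iff $\sigma=\pi r_i$ for some $2\leqslant i\leqslant n$. A proper coloring is equitable if the sizes of any two color classes differ by at most one. *)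

theory Defs
  imports "HOL-Combinatorics.Permutations"
begin

text \<open>Permutations of the n-element set {0..<n}; a permutation sigma corresponds to
the one-line word [sigma 0, sigma 1, ..., sigma (n-1)].\<close>
definition sym_vertices :: "nat \<Rightarrow> (nat \<Rightarrow> nat) set" where
  "sym_vertices n = {\<sigma>. \<sigma> permutes {0..<n}}"

text \<open>The prefix-reversal r_i as a permutation of positions (0-indexed).
Right multiplication sigma o r_i reverses the first i entries of the one-line word.\<close>
definition prefix_rev :: "nat \<Rightarrow> nat \<Rightarrow> nat" where
  "prefix_rev i = (\<lambda>j. if j < i then i - 1 - j else j)"

definition rev_adj :: "nat set \<Rightarrow> (nat \<Rightarrow> nat) \<Rightarrow> (nat \<Rightarrow> nat) \<Rightarrow> bool" where
  "rev_adj S \<sigma> \<tau> = (\<exists>i\<in>S. \<tau> = \<sigma> \<circ> prefix_rev i)"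

definition pancake_adj :: "nat \<Rightarrow> (nat \<Rightarrow> nat) \<Rightarrow> (nat \<Rightarrow> nat) \<Rightarrow> bool" where
  "pancake_adj n = rev_adj {2..n}"

text \<open>C is (the vertex set of) a connected component of the graph (V,E) that is a
cycle of length k: C is traversed by a list of k distinct vertices, and the edges
of (V,E) incident to vertices of C are exactly the cycle edges.\<close>
definition cycle_component ::
  "'a set \<Rightarrow> ('a \<Rightarrow> 'a \<Rightarrow> bool) \<Rightarrow> nat \<Rightarrow> 'a set \<Rightarrow> bool" where
  "cycle_component V E k C =
     (\<exists>xs. distinct xs \<and> set xs = C \<and> length xs = k \<and> C \<subseteq> V \<and>
        (\<forall>u\<in>C. \<forall>w\<in>V. E u w \<longleftrightarrow>
           (\<exists>j<k. (u = xs ! j \<and> w = xs ! ((j + 1) mod k)) \<or>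
                  (w = xs ! j \<and> u = xs ! ((j + 1) mod k)))))"

definition proper_coloring ::
  "'a set \<Rightarrow> ('a \<Rightarrow> 'a \<Rightarrow> bool) \<Rightarrow> nat \<Rightarrow> ('a \<Rightarrow> nat) \<Rightarrow> bool" where
  "proper_coloring V E k c =
     ((\<forall>v\<in>V. c v < k) \<and> (\<forall>u\<in>V. \<forall>v\<in>V. E u v \<longrightarrow> c u \<noteq> c v))"

definition equitable :: "'a set \<Rightarrow> nat \<Rightarrow> ('a \<Rightarrow> nat) \<Rightarrow> bool" where
  "equitable V k c =
     (\<forall>a<k. \<forall>b<k. card {v\<in>V. c v = a} \<le> card {v\<in>V. c v = b} + 1)"

end

theory Submission
  imports Defs
begin

(*
  Since r4 r5 rotates the first five positions cyclically, r4 and r5 generate a dihedral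
  group of order 10.  The components of the subgraph spanned by r4 and r5 are its left
  cosets, each a 10-cycle, and have constant sign because r4 and r5 are even.

  Both r4 and r5 reverse the cyclic order of the first five entries, so they change the
  parity of the number of cyclic descents among them, whereas r2, r3, r6, r7 are odd.
  Colouring by the sign and this parity is therefore proper.  Right multiplication by r4
  swaps colours 0, 1 and 2, 3, and by r2 swaps even and odd permutations, so all four
  colour classes have n!/4 elements.
*)

lemma cycle_component_closed:
  assumes "cycle_component V E k C" "u \<in> C" "w \<in> V" "E u w"
  shows "w \<in> C"
proof -
  obtain xs where xs: "set xs = C" "length xs = k"
    and adj: "\<forall>u\<in>C. \<forall>w\<in>V. E u w \<longleftrightarrow>
           (\<exists>j<k. (u = xs ! j \<and> w = xs ! ((j + 1) mod k)) \<or>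
                  (w = xs ! j \<and> u = xs ! ((j + 1) mod k)))"
    using assms(1) unfolding cycle_component_def by blast
  then obtain j where j: "j < k" "w = xs ! j \<or> w = xs ! ((j + 1) mod k)"
    using assms(2-4) by blast
  moreover have "(j + 1) mod k < k" using j(1) by simp
  ultimately show ?thesis using xs nth_mem by metis
qed

lemma cycle_component_subset:
  assumes C: "cycle_component V E k C" and D: "cycle_component V E k D"
    and x: "x \<in> C" "x \<in> D"
  shows "C \<subseteq> D"
proof -
  obtain xs where xs: "set xs = C" "length xs = k" "C \<subseteq> V"
    and adj: "\<forall>u\<in>C. \<forall>w\<in>V. E u w \<longleftrightarrow>
           (\<exists>j<k. (u = xs ! j \<and> w = xs ! ((j + 1) mod k)) \<or>
                  (w = xs ! j \<and> u = xs ! ((j + 1) mod k)))"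
    using C unfolding cycle_component_def by blast
  obtain j0 where j0: "j0 < k" "xs ! j0 = x" using x(1) xs by (metis in_set_conv_nth)
  then have k: "0 < k" by simp
  have walk: "xs ! ((j0 + m) mod k) \<in> D" for m
  proof (induction m)
    case 0
    then show ?case using j0 x by simp
  next
    case (Suc m)
    let ?j = "(j0 + m) mod k"
    have "xs ! ?j \<in> C" "xs ! ((?j + 1) mod k) \<in> V"
      using xs k by (auto simp: nth_mem)
    moreover have "?j < k" using k by simp
    ultimately have "E (xs ! ?j) (xs ! ((?j + 1) mod k))" using adj by blast
    with Suc.IH have "xs ! ((?j + 1) mod k) \<in> D"
      using cycle_component_closed[OF D] \<open>xs ! ((?j + 1) mod k) \<in> V\<close> by blast
    then show ?case by (simp add: mod_Suc_eq)
  qed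
  show "C \<subseteq> D"
  proof
    fix y assume "y \<in> C"
    then obtain i where "i < k" "y = xs ! i" using xs by (metis in_set_conv_nth)
    moreover have "(j0 + (i + k - j0)) mod k = i" using \<open>i < k\<close> j0 by simp
    ultimately show "y \<in> D" using walk[of "i + k - j0"] by simp
  qed
qed

lemma cycle_components_disjoint:
  assumes "cycle_component V E k C" "cycle_component V E k D" "C \<noteq> D"
  shows "C \<inter> D = {}"
  using cycle_component_subset[OF assms(1,2)] cycle_component_subset[OF assms(2,1)] assms(3)
  by blast

lemma proper_coloring_mono:
  assumes "proper_coloring V E k c" "\<And>u v. F u v \<Longrightarrow> E u v"
  shows "proper_coloring V F k c"
  using assms unfolding proper_coloring_def by blast

lemma card_eq_if_involution_swaps:
  assumes "\<And>x. f (f x) = x" "f ` A \<subseteq> B" "f ` B \<subseteq> A"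
  shows "card A = card B"
  using assms by (intro bij_betw_same_card[of f] bij_betw_byWitness[where f' = f]) auto

lemma card_filter_add_card_filter_not:
  "finite A \<Longrightarrow> card {x \<in> A. P x} + card {x \<in> A. \<not> P x} = card A"
  by (subst card_Un_disjoint[symmetric]) (auto intro: arg_cong[where f = card])

subsection \<open>Prefix reversals\<close>

lemma prefix_rev_prefix_rev [simp]: "prefix_rev i (prefix_rev i x) = x"
  by (simp add: prefix_rev_def)

lemma prefix_rev_comp_prefix_rev [simp]: "prefix_rev i \<circ> prefix_rev i = id"
  by auto

lemma comp_prefix_rev_involution: "\<sigma> \<circ> prefix_rev i \<circ> prefix_rev i = \<sigma>"
  by (simp add: comp_assoc)

lemma prefix_rev_permutes: "prefix_rev i permutes {0..<i}"
  by (rule bij_imp_permutes)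
    (auto intro!: bij_betw_byWitness[where f' = "prefix_rev i"] simp: prefix_rev_def)

lemma permutation_prefix_rev: "permutation (prefix_rev i)"
  using prefix_rev_permutes permutation_permutes by blast

lemma evenperm_prefix_rev:
  assumes "2 \<le> i" "i \<le> 7"
  shows "evenperm (prefix_rev i) \<longleftrightarrow> i = 4 \<or> i = 5"
proof -
  have swaps: "prefix_rev 2 = transpose 0 1" "prefix_rev 3 = transpose 0 2"
    "prefix_rev 4 = transpose 0 3 \<circ> transpose 1 2"
    "prefix_rev 5 = transpose 0 4 \<circ> transpose 1 3"
    "prefix_rev 6 = transpose 0 5 \<circ> transpose 1 4 \<circ> transpose 2 3"
    "prefix_rev 7 = transpose 0 6 \<circ> transpose 1 5 \<circ> transpose 2 4"
    by (auto simp: fun_eq_iff prefix_rev_def transpose_def)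
  have "i \<in> {2, 3, 4, 5, 6, 7}" using assms by auto
  then show ?thesis
    by (auto simp: swaps evenperm_comp evenperm_swap permutation_swap_id permutation_compose)
qed

lemma permutation_sym_vertex: "\<sigma> \<in> sym_vertices n \<Longrightarrow> permutation \<sigma>"
  unfolding sym_vertices_def using permutation_permutes by blast

lemma sym_vertices_comp_prefix_rev:
  "\<sigma> \<in> sym_vertices n \<Longrightarrow> i \<le> n \<Longrightarrow> \<sigma> \<circ> prefix_rev i \<in> sym_vertices n"
  unfolding sym_vertices_def mem_Collect_eq
  by (rule permutes_compose[OF permutes_subset[OF prefix_rev_permutes]]) auto

lemma evenperm_comp_prefix_rev:
  "\<sigma> \<in> sym_vertices n \<Longrightarrow> evenperm (\<sigma> \<circ> prefix_rev i) \<longleftrightarrow> evenperm \<sigma> = evenperm (prefix_rev i)"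
  by (simp add: evenperm_comp permutation_sym_vertex permutation_prefix_rev)

subsection \<open>The cycles of the subgraph spanned by r4 and r5\<close>

definition alt_rev :: "nat \<Rightarrow> nat \<Rightarrow> nat" where
  "alt_rev k = prefix_rev (if even k then 4 else 5)"

fun r45_word :: "nat \<Rightarrow> nat \<Rightarrow> nat" where
  "r45_word 0 = id"
| "r45_word (Suc k) = r45_word k \<circ> alt_rev k"

(* lets simp evaluate r45_word at numerals without rewriting them into Suc-terms *)
lemma r45_word_numeral:
  "r45_word (numeral k) = r45_word (pred_numeral k) \<circ> alt_rev (pred_numeral k)"
  by (simp add: numeral_eq_Suc)

lemma r45_word_permutes: "r45_word k permutes {0..<5}"
proof (induction k)
  case (Suc k)
  have "alt_rev k permutes {0..<5}"
    unfolding alt_rev_def by (auto intro: permutes_subset[OF prefix_rev_permutes])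
  then show ?case
    unfolding r45_word.simps(2) using Suc.IH by (rule permutes_compose)
qed (simp add: permutes_id[unfolded id_def])

lemma permutation_r45_word: "permutation (r45_word k)"
  using r45_word_permutes permutation_permutes by blast

lemma evenperm_r45_word: "evenperm (r45_word k)"
proof (induction k)
  case (Suc k)
  have "permutation (r45_word k)" by (rule permutation_r45_word)
  moreover have "permutation (alt_rev k)" "evenperm (alt_rev k)"
    by (simp_all add: alt_rev_def permutation_prefix_rev evenperm_prefix_rev)
  ultimately have "evenperm (r45_word k \<circ> alt_rev k)"
    using Suc.IH by (subst evenperm_comp) simp_all
  then show ?case by (simp add: comp_def)
qed (simp add: evenperm_id)

lemma r45_word_10: "r45_word 10 = id"
proof
  fix x
  show "r45_word 10 x = id x"
  proof (cases "x < 5")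
    case True
    then have "x = 0 \<or> x = 1 \<or> x = 2 \<or> x = 3 \<or> x = 4" by auto
    then show ?thesis by (elim disjE) (simp_all add: r45_word_numeral alt_rev_def prefix_rev_def)
  next
    case False
    then show ?thesis
      using r45_word_permutes[of 10] by (simp add: permutes_not_in)
  qed
qed

lemma inj_on_r45_word: "inj_on r45_word {..<10}"
proof -
  have "{..<10::nat} = {0, 1, 2, 3, 4, 5, 6, 7, 8, 9}" by auto
  then have "inj_on (\<lambda>k. (r45_word k 0, r45_word k 1)) {..<10}"
    by (simp add: r45_word_numeral alt_rev_def prefix_rev_def)
  then show ?thesis unfolding inj_on_def by metis
qed

lemma r45_word_step:
  assumes "i < 10"
  shows "r45_word (Suc i mod 10) = r45_word i \<circ> alt_rev i"
proof (cases "Suc i = 10")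
  case True
  then show ?thesis using r45_word_10 by (metis r45_word.simps mod_self)
next
  case False
  with assms show ?thesis by simp
qed

lemma r45_word_step_back: "i < 10 \<Longrightarrow> r45_word (Suc i mod 10) \<circ> alt_rev i = r45_word i"
  by (simp add: r45_word_step comp_assoc alt_rev_def)

lemma alt_rev_pred:
  assumes "j < 10" "m \<in> {4, 5}" "alt_rev j \<noteq> prefix_rev m"
  obtains i where "i < 10" "Suc i mod 10 = j" "alt_rev i = prefix_rev m"
proof
  let ?i = "(j + 9) mod 10"
  show "?i < 10" "Suc ?i mod 10 = j" using assms(1) by (simp_all add: mod_Suc_eq)
  have "even ?i \<longleftrightarrow> odd j" using assms(1) by presburger
  then show "alt_rev ?i = prefix_rev m"
    using assms(2,3) by (auto simp: alt_rev_def split: if_splits)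
qed

definition r45_coset :: "(nat \<Rightarrow> nat) \<Rightarrow> (nat \<Rightarrow> nat) set" where
  "r45_coset \<sigma> = (\<lambda>k. \<sigma> \<circ> r45_word k) ` {..<10}"

lemma self_in_r45_coset: "\<sigma> \<in> r45_coset \<sigma>"
  unfolding r45_coset_def by (rule image_eqI[of _ _ 0]) auto

lemma r45_coset_subset: "5 \<le> n \<Longrightarrow> \<sigma> \<in> sym_vertices n \<Longrightarrow> r45_coset \<sigma> \<subseteq> sym_vertices n"
  unfolding r45_coset_def sym_vertices_def
  by (auto intro!: permutes_compose[OF permutes_subset[OF r45_word_permutes]])

lemma evenperm_r45_coset:
  "\<sigma> \<in> sym_vertices n \<Longrightarrow> \<tau> \<in> r45_coset \<sigma> \<Longrightarrow> evenperm \<tau> = evenperm \<sigma>"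
  by (auto simp: r45_coset_def evenperm_comp permutation_sym_vertex permutation_r45_word
      evenperm_r45_word)

lemma inj_on_comp_r45_word:
  assumes "inj \<sigma>"
  shows "inj_on (\<lambda>k. \<sigma> \<circ> r45_word k) {..<10}"
proof (rule inj_onI)
  fix a b assume ab: "a \<in> {..<10}" "b \<in> {..<10}" "\<sigma> \<circ> r45_word a = \<sigma> \<circ> r45_word b"
  then have "r45_word a = r45_word b" using assms by (simp add: fun_eq_iff inj_eq)
  then show "a = b" using inj_onD[OF inj_on_r45_word _ ab(1,2)] by blast
qed

lemma rev_adj_r45_coset_iff:
  assumes "u \<in> r45_coset \<sigma>"
  shows "rev_adj {4, 5} u w \<longleftrightarrow>
    (\<exists>i<10. (u = \<sigma> \<circ> r45_word i \<and> w = \<sigma> \<circ> r45_word (Suc i mod 10)) \<or>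
            (w = \<sigma> \<circ> r45_word i \<and> u = \<sigma> \<circ> r45_word (Suc i mod 10)))"
proof
  assume "rev_adj {4, 5} u w"
  then obtain j m where j: "j < 10" and u: "u = \<sigma> \<circ> r45_word j"
    and m: "m \<in> {4, 5}" and w: "w = u \<circ> prefix_rev m"
    using assms by (auto simp: r45_coset_def rev_adj_def)
  show "\<exists>i<10. (u = \<sigma> \<circ> r45_word i \<and> w = \<sigma> \<circ> r45_word (Suc i mod 10)) \<or>
               (w = \<sigma> \<circ> r45_word i \<and> u = \<sigma> \<circ> r45_word (Suc i mod 10))"
  proof (cases "alt_rev j = prefix_rev m")
    case True
    then have "w = \<sigma> \<circ> r45_word (Suc j mod 10)"
      by (simp add: w u r45_word_step[OF j] comp_assoc)
    then show ?thesis using j u by blast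
  next
    case False
    then obtain i where i: "i < 10" "Suc i mod 10 = j" "alt_rev i = prefix_rev m"
      using alt_rev_pred j m by blast
    then have "w = \<sigma> \<circ> r45_word i"
      using r45_word_step_back[OF i(1)] by (simp add: w u comp_assoc)
    then show ?thesis using i u by blast
  qed
next
  assume "\<exists>i<10. (u = \<sigma> \<circ> r45_word i \<and> w = \<sigma> \<circ> r45_word (Suc i mod 10)) \<or>
                 (w = \<sigma> \<circ> r45_word i \<and> u = \<sigma> \<circ> r45_word (Suc i mod 10))"
  then obtain i where "i < 10" "w = u \<circ> alt_rev i"
    using r45_word_step r45_word_step_back by (metis comp_assoc)
  then show "rev_adj {4, 5} u w" by (auto simp: rev_adj_def alt_rev_def)
qed

lemma r45_coset_cycle_component:
  assumes "5 \<le> n" "\<sigma> \<in> sym_vertices n"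
  shows "cycle_component (sym_vertices n) (rev_adj {4, 5}) 10 (r45_coset \<sigma>)"
  unfolding cycle_component_def
proof (intro exI conjI)
  let ?xs = "map (\<lambda>k. \<sigma> \<circ> r45_word k) [0..<10]"
  have "inj \<sigma>" using assms(2) permutes_inj by (auto simp: sym_vertices_def)
  then show "distinct ?xs"
    using inj_on_comp_r45_word by (simp add: distinct_map lessThan_atLeast0)
  show "set ?xs = r45_coset \<sigma>" by (auto simp: r45_coset_def)
  show "length ?xs = 10" by simp
  show "r45_coset \<sigma> \<subseteq> sym_vertices n" using r45_coset_subset[OF assms] .
  show "\<forall>u\<in>r45_coset \<sigma>. \<forall>w\<in>sym_vertices n. rev_adj {4, 5} u w \<longleftrightarrow>
          (\<exists>j<10. (u = ?xs ! j \<and> w = ?xs ! ((j + 1) mod 10)) \<or>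
                 (w = ?xs ! j \<and> u = ?xs ! ((j + 1) mod 10)))"
    by (simp add: rev_adj_r45_coset_iff cong: conj_cong)
qed

lemma r45_cycle_decomposition:
  assumes "5 \<le> n"
  shows "\<exists>\<C>. \<Union>\<C> = sym_vertices n \<and>
            (\<forall>C\<in>\<C>. \<forall>D\<in>\<C>. C \<noteq> D \<longrightarrow> C \<inter> D = {}) \<and>
            (\<forall>C\<in>\<C>. cycle_component (sym_vertices n) (rev_adj {4, 5}) 10 C) \<and>
            (\<forall>C\<in>\<C>. \<forall>\<sigma>\<in>C. \<forall>\<tau>\<in>C. evenperm \<sigma> = evenperm \<tau>)"
proof (intro exI[of _ "r45_coset ` sym_vertices n"] conjI)
  show "\<Union> (r45_coset ` sym_vertices n) = sym_vertices n"
    using r45_coset_subset[OF assms] self_in_r45_coset by blast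
  show components: "\<forall>C\<in>r45_coset ` sym_vertices n.
      cycle_component (sym_vertices n) (rev_adj {4, 5}) 10 C"
    using r45_coset_cycle_component[OF assms] by blast
  then show "\<forall>C\<in>r45_coset ` sym_vertices n. \<forall>D\<in>r45_coset ` sym_vertices n.
      C \<noteq> D \<longrightarrow> C \<inter> D = {}"
    using cycle_components_disjoint by blast
  show "\<forall>C\<in>r45_coset ` sym_vertices n. \<forall>\<sigma>\<in>C. \<forall>\<tau>\<in>C. evenperm \<sigma> = evenperm \<tau>"
    using evenperm_r45_coset by fastforce
qed

subsection \<open>The colouring\<close>

definition cyclic_descents :: "(nat \<Rightarrow> nat) \<Rightarrow> nat" where
  "cyclic_descents \<sigma> = of_bool (\<sigma> 1 < \<sigma> 0) + of_bool (\<sigma> 2 < \<sigma> 1) + of_bool (\<sigma> 3 < \<sigma> 2)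
     + of_bool (\<sigma> 4 < \<sigma> 3) + of_bool (\<sigma> 0 < \<sigma> 4)"

lemma cyclic_descents_comp_r45:
  assumes "inj \<sigma>" "m \<in> {4, 5}"
  shows "cyclic_descents (\<sigma> \<circ> prefix_rev m) + cyclic_descents \<sigma> = 5"
proof -
  have ascent_or_descent: "of_bool (\<sigma> x < \<sigma> y) + of_bool (\<sigma> y < \<sigma> x) = (1::nat)"
    if "x \<noteq> y" for x y
    using that assms(1) by (auto simp: inj_eq)
  from assms(2) consider "m = 4" | "m = 5" by blast
  then show ?thesis
    using ascent_or_descent[of 0 1] ascent_or_descent[of 1 2] ascent_or_descent[of 2 3]
      ascent_or_descent[of 3 4] ascent_or_descent[of 4 0]
    by cases (simp_all add: cyclic_descents_def prefix_rev_def)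
qed

definition pancake_coloring :: "(nat \<Rightarrow> nat) \<Rightarrow> nat" where
  "pancake_coloring \<sigma> = (if evenperm \<sigma> then 0 else 2) + cyclic_descents \<sigma> mod 2"

lemma pancake_coloring_less_4: "pancake_coloring \<sigma> < 4"
  unfolding pancake_coloring_def using mod_less_divisor[of 2 "cyclic_descents \<sigma>"] by auto

lemma pancake_coloring_less_2_iff: "pancake_coloring \<sigma> < 2 \<longleftrightarrow> evenperm \<sigma>"
  by (simp add: pancake_coloring_def)

lemma pancake_coloring_comp_r45:
  assumes "\<sigma> \<in> sym_vertices n" "m \<in> {4, 5}"
  shows "pancake_coloring (\<sigma> \<circ> prefix_rev m) =
    (if even (pancake_coloring \<sigma>) then Suc (pancake_coloring \<sigma>) else pancake_coloring \<sigma> - 1)"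
proof -
  have "evenperm (\<sigma> \<circ> prefix_rev m) = evenperm \<sigma>"
    using assms evenperm_comp_prefix_rev evenperm_prefix_rev by auto
  moreover have "cyclic_descents (\<sigma> \<circ> prefix_rev m) + cyclic_descents \<sigma> = 5"
    using assms permutes_inj by (auto simp: sym_vertices_def intro!: cyclic_descents_comp_r45)
  then have "odd (cyclic_descents (\<sigma> \<circ> prefix_rev m) + cyclic_descents \<sigma>)" by simp
  then have "odd (cyclic_descents (\<sigma> \<circ> prefix_rev m)) \<longleftrightarrow> even (cyclic_descents \<sigma>)"
    by simp
  ultimately show ?thesis
    by (auto simp: pancake_coloring_def odd_iff_mod_2_eq_one even_iff_mod_2_eq_zero)
qed

lemma pancake_coloring_comp_odd_rev:
  assumes "\<sigma> \<in> sym_vertices n" "2 \<le> i" "i \<le> 7" "i \<notin> {4, 5}"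
  shows "pancake_coloring (\<sigma> \<circ> prefix_rev i) < 2 \<longleftrightarrow> \<not> pancake_coloring \<sigma> < 2"
  using assms evenperm_comp_prefix_rev evenperm_prefix_rev
  by (simp add: pancake_coloring_less_2_iff)

lemma proper_pancake_coloring:
  assumes "n \<le> 7"
  shows "proper_coloring (sym_vertices n) (pancake_adj n) 4 pancake_coloring"
  unfolding proper_coloring_def
proof (intro conjI ballI impI)
  fix \<sigma> \<tau> assume \<sigma>: "\<sigma> \<in> sym_vertices n" and "pancake_adj n \<sigma> \<tau>"
  then obtain i where i: "2 \<le> i" "i \<le> n" and \<tau>: "\<tau> = \<sigma> \<circ> prefix_rev i"
    by (auto simp: pancake_adj_def rev_adj_def)
  show "pancake_coloring \<sigma> \<noteq> pancake_coloring \<tau>"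
  proof (cases "i \<in> {4, 5}")
    case True
    then show ?thesis using pancake_coloring_comp_r45[OF \<sigma>] \<tau> by (auto dest: odd_pos)
  next
    case False
    then show ?thesis using pancake_coloring_comp_odd_rev[OF \<sigma> i(1) _ False] i(2) assms \<tau> by auto
  qed
qed (rule pancake_coloring_less_4)

lemma card_pancake_coloring_swap_r4:
  assumes "4 \<le> n" "even b"
  shows "card {\<sigma> \<in> sym_vertices n. pancake_coloring \<sigma> = b} =
    card {\<sigma> \<in> sym_vertices n. pancake_coloring \<sigma> = Suc b}"
proof (rule card_eq_if_involution_swaps[of "\<lambda>\<sigma>. \<sigma> \<circ> prefix_rev 4"])
  have "\<sigma> \<circ> prefix_rev 4 \<in> sym_vertices n"
    and "pancake_coloring (\<sigma> \<circ> prefix_rev 4) =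
      (if even (pancake_coloring \<sigma>) then Suc (pancake_coloring \<sigma>) else pancake_coloring \<sigma> - 1)"
    if "\<sigma> \<in> sym_vertices n" for \<sigma>
    using that assms(1) by (simp_all add: sym_vertices_comp_prefix_rev pancake_coloring_comp_r45)
  with assms(2) show "(\<lambda>\<sigma>. \<sigma> \<circ> prefix_rev 4) ` {\<sigma> \<in> sym_vertices n. pancake_coloring \<sigma> = b}
      \<subseteq> {\<sigma> \<in> sym_vertices n. pancake_coloring \<sigma> = Suc b}"
    and "(\<lambda>\<sigma>. \<sigma> \<circ> prefix_rev 4) ` {\<sigma> \<in> sym_vertices n. pancake_coloring \<sigma> = Suc b}
      \<subseteq> {\<sigma> \<in> sym_vertices n. pancake_coloring \<sigma> = b}"
    by auto
qed (rule comp_prefix_rev_involution)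

lemma card_pancake_coloring_swap_r2:
  assumes "2 \<le> n"
  shows "card {\<sigma> \<in> sym_vertices n. pancake_coloring \<sigma> < 2} =
    card {\<sigma> \<in> sym_vertices n. \<not> pancake_coloring \<sigma> < 2}"
proof (rule card_eq_if_involution_swaps[of "\<lambda>\<sigma>. \<sigma> \<circ> prefix_rev 2"])
  have "\<sigma> \<circ> prefix_rev 2 \<in> sym_vertices n"
    and "pancake_coloring (\<sigma> \<circ> prefix_rev 2) < 2 \<longleftrightarrow> \<not> pancake_coloring \<sigma> < 2"
    if "\<sigma> \<in> sym_vertices n" for \<sigma>
    using that assms by (simp_all add: sym_vertices_comp_prefix_rev pancake_coloring_comp_odd_rev)
  then show "(\<lambda>\<sigma>. \<sigma> \<circ> prefix_rev 2) ` {\<sigma> \<in> sym_vertices n. pancake_coloring \<sigma> < 2}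
      \<subseteq> {\<sigma> \<in> sym_vertices n. \<not> pancake_coloring \<sigma> < 2}"
    and "(\<lambda>\<sigma>. \<sigma> \<circ> prefix_rev 2) ` {\<sigma> \<in> sym_vertices n. \<not> pancake_coloring \<sigma> < 2}
      \<subseteq> {\<sigma> \<in> sym_vertices n. pancake_coloring \<sigma> < 2}"
    by auto
qed (rule comp_prefix_rev_involution)

lemma card_pancake_coloring_class:
  assumes "4 \<le> n" "a < 4"
  shows "card {\<sigma> \<in> sym_vertices n. pancake_coloring \<sigma> = a} = fact n div 4"
proof -
  let ?V = "sym_vertices n"
  define colour_class where "colour_class b = {\<sigma> \<in> ?V. pancake_coloring \<sigma> = b}" for b
  have finV: "finite ?V"
    unfolding sym_vertices_def by (simp add: finite_permutations)
  then have fin: "finite (colour_class b)" for b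
    unfolding colour_class_def by simp
  have c01: "card (colour_class 1) = card (colour_class 0)"
    and c23: "card (colour_class 3) = card (colour_class 2)"
    using card_pancake_coloring_swap_r4[OF assms(1), of 0] card_pancake_coloring_swap_r4[OF assms(1), of 2]
    by (simp_all add: colour_class_def numeral_3_eq_3)
  have disjoint: "b \<noteq> c \<Longrightarrow> colour_class b \<inter> colour_class c = {}" for b c
    by (auto simp: colour_class_def)
  have low: "pancake_coloring \<sigma> < 2 \<longleftrightarrow> pancake_coloring \<sigma> = 0 \<or> pancake_coloring \<sigma> = 1"
    and high: "\<not> pancake_coloring \<sigma> < 2 \<longleftrightarrow> pancake_coloring \<sigma> = 2 \<or> pancake_coloring \<sigma> = 3"
    for \<sigma> using pancake_coloring_less_4[of \<sigma>] by linarith+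
  have evens: "{\<sigma> \<in> ?V. pancake_coloring \<sigma> < 2} = colour_class 0 \<union> colour_class 1"
    and odds: "{\<sigma> \<in> ?V. \<not> pancake_coloring \<sigma> < 2} = colour_class 2 \<union> colour_class 3"
    unfolding colour_class_def using low high by blast+
  have card_evens: "card {\<sigma> \<in> ?V. pancake_coloring \<sigma> < 2} = card (colour_class 0) + card (colour_class 1)"
    and card_odds: "card {\<sigma> \<in> ?V. \<not> pancake_coloring \<sigma> < 2} = card (colour_class 2) + card (colour_class 3)"
    unfolding evens odds by (simp_all add: card_Un_disjoint[OF fin fin disjoint])
  have "card ?V = fact n"
    unfolding sym_vertices_def by (simp add: card_permutations)
  then have "card {\<sigma> \<in> ?V. pancake_coloring \<sigma> < 2} + card {\<sigma> \<in> ?V. \<not> pancake_coloring \<sigma> < 2} = fact n"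
    using card_filter_add_card_filter_not[OF finV] by simp
  then have "card (colour_class 2) = card (colour_class 0)" "4 * card (colour_class 0) = fact n"
    using card_pancake_coloring_swap_r2[of n] assms(1) card_evens card_odds c01 c23 by linarith+
  moreover have "a = 0 \<or> a = 1 \<or> a = 2 \<or> a = 3" using assms(2) by auto
  ultimately have "card (colour_class a) = fact n div 4"
    using c01 c23 by auto
  then show ?thesis by (simp add: colour_class_def)
qed

theorem mainTheorem6:
  fixes n :: nat
  assumes "n \<in> {5, 6, 7}"
  shows "(\<exists>\<C>. \<Union>\<C> = sym_vertices n \<and>
            (\<forall>C\<in>\<C>. \<forall>D\<in>\<C>. C \<noteq> D \<longrightarrow> C \<inter> D = {}) \<and>
            (\<forall>C\<in>\<C>. cycle_component (sym_vertices n) (rev_adj {4, 5}) 10 C) \<and>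
            (\<forall>C\<in>\<C>. \<forall>\<sigma>\<in>C. \<forall>\<tau>\<in>C. evenperm \<sigma> = evenperm \<tau>))
       \<and> (\<exists>c. proper_coloring (sym_vertices n) (pancake_adj n) 4 c \<and>
            equitable (sym_vertices n) 4 c \<and>
            (\<forall>a<4. card {\<sigma>\<in>sym_vertices n. c \<sigma> = a} = fact n div 4) \<and>
            (\<forall>\<sigma>\<in>sym_vertices n. c \<sigma> < 2 \<longleftrightarrow> evenperm \<sigma>) \<and>
            proper_coloring (sym_vertices n) (rev_adj {4, 5}) 4 c)"
proof -
  have n: "5 \<le> n" "n \<le> 7" using assms by auto
  have proper: "proper_coloring (sym_vertices n) (pancake_adj n) 4 pancake_coloring"
    using proper_pancake_coloring[OF n(2)] .
  moreover have "proper_coloring (sym_vertices n) (rev_adj {4, 5}) 4 pancake_coloring"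
    by (rule proper_coloring_mono[OF proper]) (use n(1) in \<open>auto simp: pancake_adj_def rev_adj_def\<close>)
  moreover have "\<forall>a<4. card {\<sigma>\<in>sym_vertices n. pancake_coloring \<sigma> = a} = fact n div 4"
    using card_pancake_coloring_class n(1) by simp
  ultimately show ?thesis
    using r45_cycle_decomposition[OF n(1)] pancake_coloring_less_2_iff
    by (intro conjI exI[of _ pancake_coloring]) (auto simp: equitable_def)
qed

end
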